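(* Let $T$ be a tree with a root $r$, and let $X\subseteq\|T\|$ be a subspace. Then $X$ is first countable if and only if every $x\in X\cap V(T)$ has only countably many children $t$ with $\lceil t\rceil\cap X\neq\emptyset$.
   Context: For a tree $T$, $\|T\|=V(T)\cup\Omega(T)$, where $\Omega(T)$ is the set of ends (equivalence classes of rays, two rays being equivalent if they share a tail). A region of $T$ is a connected subgraph $C$ with finitely many edges leaving it; $\|C\|$ is $V(C)$ together with the ends of $T$ having a ray in $C$; the sets $\|C\|$ for regions $C$ form a basis of the (compact Hausdorff) topology of $\|T\|$. The tree order: $u\le v$ if $u$ lies on the unique $r$–$v$ path in $T$. The children of $x$ are its neighbours $y$ with $y> x$. For a node $t$, $\lceil t\rceil$ denotes the set of nodes $v\ge t$ together with the ends of $T$ whose ray starting at $r$ passes through $t$. *)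

theory Defs
  imports "HOL-Analysis.Analysis"
begin

definition graph :: "'v set \<Rightarrow> ('v \<Rightarrow> 'v \<Rightarrow> bool) \<Rightarrow> bool" where
  "graph V E \<longleftrightarrow> (\<forall>x y. E x y \<longrightarrow> x \<in> V \<and> y \<in> V \<and> E y x \<and> x \<noteq> y)"

definition is_path :: "'v set \<Rightarrow> ('v \<Rightarrow> 'v \<Rightarrow> bool) \<Rightarrow> 'v list \<Rightarrow> bool" where
  "is_path V E p \<longleftrightarrow> p \<noteq> [] \<and> set p \<subseteq> V \<and> distinct p \<and>
     (\<forall>i. Suc i < length p \<longrightarrow> E (p ! i) (p ! Suc i))"

definition is_cycle :: "'v set \<Rightarrow> ('v \<Rightarrow> 'v \<Rightarrow> bool) \<Rightarrow> 'v list \<Rightarrow> bool" where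
  "is_cycle V E p \<longleftrightarrow> is_path V E p \<and> length p \<ge> 3 \<and> E (last p) (hd p)"

definition connected_set :: "'v set \<Rightarrow> ('v \<Rightarrow> 'v \<Rightarrow> bool) \<Rightarrow> 'v set \<Rightarrow> bool" where
  "connected_set V E S \<longleftrightarrow> S \<subseteq> V \<and>
     (\<forall>u\<in>S. \<forall>v\<in>S. \<exists>p. is_path V E p \<and> set p \<subseteq> S \<and> hd p = u \<and> last p = v)"

definition tree :: "'v set \<Rightarrow> ('v \<Rightarrow> 'v \<Rightarrow> bool) \<Rightarrow> bool" where
  "tree V E \<longleftrightarrow> graph V E \<and> V \<noteq> {} \<and> connected_set V E V \<and> \<not> (\<exists>p. is_cycle V E p)"

definition is_ray :: "'v set \<Rightarrow> ('v \<Rightarrow> 'v \<Rightarrow> bool) \<Rightarrow> (nat \<Rightarrow> 'v) \<Rightarrow> bool" where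
  "is_ray V E f \<longleftrightarrow> inj f \<and> range f \<subseteq> V \<and> (\<forall>i. E (f i) (f (Suc i)))"

definition ray_equiv :: "(nat \<Rightarrow> 'v) \<Rightarrow> (nat \<Rightarrow> 'v) \<Rightarrow> bool" where
  "ray_equiv f g \<longleftrightarrow> (\<exists>i j. \<forall>k. f (i + k) = g (j + k))"

definition ends :: "'v set \<Rightarrow> ('v \<Rightarrow> 'v \<Rightarrow> bool) \<Rightarrow> (nat \<Rightarrow> 'v) set set" where
  "ends V E = {{g. is_ray V E g \<and> ray_equiv f g} | f. is_ray V E f}"

text \<open>The space \<open>\<parallel>T\<parallel>\<close>: vertices (Inl) and ends (Inr).\<close>
type_synonym 'v point = "'v + (nat \<Rightarrow> 'v) set"

definition points :: "'v set \<Rightarrow> ('v \<Rightarrow> 'v \<Rightarrow> bool) \<Rightarrow> 'v point set" where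
  "points V E = Inl ` V \<union> Inr ` ends V E"

text \<open>A connected
  subgraph of a tree contains all edges of the tree between its vertices, so it is
  determined by its (nonempty, connected) vertex set S.\<close>
definition region :: "'v set \<Rightarrow> ('v \<Rightarrow> 'v \<Rightarrow> bool) \<Rightarrow> 'v set \<Rightarrow> bool" where
  "region V E S \<longleftrightarrow> S \<noteq> {} \<and> connected_set V E S \<and>
     finite {(x, y). x \<in> S \<and> y \<notin> S \<and> E x y}"

definition region_points :: "'v set \<Rightarrow> ('v \<Rightarrow> 'v \<Rightarrow> bool) \<Rightarrow> 'v set \<Rightarrow> 'v point set" where
  "region_points V E S = Inl ` S \<union> Inr ` {\<omega> \<in> ends V E. \<exists>f\<in>\<omega>. range f \<subseteq> S}"

definition end_topology :: "'v set \<Rightarrow> ('v \<Rightarrow> 'v \<Rightarrow> bool) \<Rightarrow> 'v point topology" where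
  "end_topology V E = topology_generated_by {region_points V E S | S. region V E S}"

definition tree_le :: "'v set \<Rightarrow> ('v \<Rightarrow> 'v \<Rightarrow> bool) \<Rightarrow> 'v \<Rightarrow> 'v \<Rightarrow> 'v \<Rightarrow> bool" where
  "tree_le V E r u v \<longleftrightarrow> (\<exists>p. is_path V E p \<and> hd p = r \<and> last p = v \<and> u \<in> set p)"

definition children :: "'v set \<Rightarrow> ('v \<Rightarrow> 'v \<Rightarrow> bool) \<Rightarrow> 'v \<Rightarrow> 'v \<Rightarrow> 'v set" where
  "children V E r x = {y. E x y \<and> tree_le V E r x y \<and> x \<noteq> y}"

definition up_closure :: "'v set \<Rightarrow> ('v \<Rightarrow> 'v \<Rightarrow> bool) \<Rightarrow> 'v \<Rightarrow> 'v \<Rightarrow> 'v point set" where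
  "up_closure V E r t = Inl ` {v \<in> V. tree_le V E r t v} \<union>
     Inr ` {\<omega> \<in> ends V E. \<exists>f\<in>\<omega>. f 0 = r \<and> t \<in> range f}"

end

theory Submission
  imports Defs
begin

text \<open>Every end \<open>\<omega>\<close> has a countable neighbourhood base: if \<open>g\<close> is the ray in \<open>\<omega>\<close> starting
  at the root, the sets \<open>\<parallel>\<lceil>g n\<rceil>\<parallel>\<close> form one, since only finitely many edges leave a region and
  \<open>g\<close> eventually lies above all of them. A vertex \<open>x\<close> has the neighbourhood base of the sets
  \<open>\<parallel>{x} \<union> \<Union>{\<lceil>t\<rceil> | t a child of x, t \<notin> F}\<parallel>\<close> with \<open>F\<close> finite. Traced on \<open>X\<close>, only the
  children \<open>t\<close> with \<open>\<lceil>t\<rceil> \<inter> X \<noteq> {}\<close> matter, so countably many of them give a countable base of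
  \<open>X\<close> at \<open>x\<close>. Conversely, a countable base of \<open>X\<close> at \<open>x\<close> involves only countably many children
  in the sets \<open>F\<close>; if uncountably many children meet \<open>X\<close>, one of the remaining ones, \<open>t\<close>, has a
  point of \<open>\<lceil>t\<rceil> \<inter> X\<close> in every member of the base, but not in the neighbourhood omitting
  \<open>\<lceil>t\<rceil>\<close>.\<close>

section \<open>Paths in graphs and trees\<close>

lemma is_path_iff_successively:
  "is_path V E p \<longleftrightarrow> p \<noteq> [] \<and> set p \<subseteq> V \<and> distinct p \<and> successively E p"
  unfolding is_path_def successively_conv_nth ..

lemma is_path_take:
  assumes "is_path V E p" "j < length p"
  shows "is_path V E (take (Suc j) p)"
proof -
  have "successively E (take (Suc j) p @ drop (Suc j) p)"
    using assms by (simp add: is_path_iff_successively)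
  then have "successively E (take (Suc j) p)" using successively_append_iff by blast
  then show ?thesis
    using assms set_take_subset[of "Suc j" p] by (auto simp: is_path_iff_successively)
qed

lemma walk_contains_path:
  assumes "successively E w" "w \<noteq> []"
  shows "\<exists>p. p \<noteq> [] \<and> distinct p \<and> successively E p \<and> set p \<subseteq> set w \<and>
    hd p = hd w \<and> last p = last w"
  using assms
proof (induction "length w" arbitrary: w rule: less_induct)
  case less
  show ?case
  proof (cases "distinct w")
    case True
    then show ?thesis using less by blast
  next
    case False
    then obtain xs a ys zs where w: "w = xs @ [a] @ ys @ [a] @ zs"
      using not_distinct_decomp by blast
    let ?w = "xs @ [a] @ zs"
    have "successively E ?w" "length ?w < length w"
      using less(2) unfolding w by (auto simp: successively_append_iff successively_Cons)
    then obtain p where "p \<noteq> [] \<and> distinct p \<and> successively E p \<and> set p \<subseteq> set ?w \<and>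
        hd p = hd ?w \<and> last p = last ?w"
      using less(1) by blast
    moreover have "hd ?w = hd w" "last ?w = last w" "set ?w \<subseteq> set w"
      using w by (auto simp: hd_append)
    ultimately show ?thesis by auto
  qed
qed

lemma walk_leaves_set:
  assumes "successively E w" "w \<noteq> []" "hd w \<in> S" "last w \<notin> S"
  shows "\<exists>a b. a \<in> S \<and> b \<notin> S \<and> E a b \<and> b \<in> set w"
  using assms
proof (induction w)
  case (Cons a w)
  then show ?case by (cases w) (auto simp: successively_Cons)
qed simp

lemma graph_edgeD:
  assumes "graph V E" "E x y"
  shows "x \<in> V" "y \<in> V" "E y x" "x \<noteq> y"
  using assms unfolding graph_def by blast+

lemma graph_successively_rev:
  "graph V E \<Longrightarrow> successively E w \<Longrightarrow> successively E (rev w)"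
  by (simp add: successively_mono graph_edgeD(3))

lemma cycle_of_two_paths:
  assumes G: "graph V E"
    and p: "distinct (u # A @ [c])" "successively E (u # A @ [c])"
    and q: "distinct (u # B @ [c])" "successively E (u # B @ [c])"
    and AB: "set A \<inter> set B = {}" "A \<noteq> [] \<or> B \<noteq> []"
    and V: "set (u # A @ c # B) \<subseteq> V"
  shows "is_cycle V E (u # A @ c # rev B)"
proof -
  have "successively E (B @ [c])"
    using q(2) successively_append_iff[of E "[u]" "B @ [c]"] by simp
  then have "successively E (c # rev B)"
    using graph_successively_rev[OF G] by fastforce
  moreover have "successively E (u # A)" "E (last (u # A)) c"
    using p(2) successively_append_iff[of E "u # A" "[c]"] by simp_all
  ultimately have "successively E ((u # A) @ (c # rev B))"
    unfolding successively_append_iff by simp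
  moreover have "E (last (c # rev B)) u"
  proof (cases B)
    case Nil
    then show ?thesis using q(2) graph_edgeD(3)[OF G] by simp
  next
    case (Cons b B')
    then show ?thesis using q(2) graph_edgeD(3)[OF G] by (simp add: last_rev)
  qed
  moreover have "distinct (u # A @ c # rev B)" using p(1) q(1) AB(1) by auto
  moreover have "length (u # A @ c # rev B) \<ge> 3" using AB(2) by (auto simp: Suc_le_eq)
  ultimately show ?thesis
    using V unfolding is_cycle_def is_path_iff_successively by auto
qed

text \<open>Two distinct paths with common ends contain a cycle: follow both from their first
  divergence up to the first vertex where they meet again.\<close>

lemma tree_path_unique:
  assumes T: "tree V E" and "is_path V E p" "is_path V E q" "hd p = hd q" "last p = last q"
  shows "p = q"
  using assms(2-)
proof (induction p arbitrary: q)
  case Nil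
  then show ?case by (simp add: is_path_def)
next
  case (Cons u p')
  have G: "graph V E" using T by (simp add: tree_def)
  obtain q' where q: "q = u # q'" using Cons.prems by (cases q) (auto simp: is_path_def)
  have dp: "distinct (u # p')" "successively E (u # p')" "set (u # p') \<subseteq> V"
    and dq: "distinct (u # q')" "successively E (u # q')" "set (u # q') \<subseteq> V"
    using Cons.prems q by (auto simp: is_path_iff_successively)
  have last_eq: "last (u # p') = last (u # q')" using Cons.prems q by simp
  consider "p' = []" | "q' = []" | "p' \<noteq> []" "q' \<noteq> []" "hd p' = hd q'"
    | "p' \<noteq> []" "q' \<noteq> []" "hd p' \<noteq> hd q'"
    by blast
  then show ?case
  proof cases
    case 1
    have "q' = []"
    proof (rule ccontr)
      assume "q' \<noteq> []"
      then have "u \<in> set q'" using last_eq 1 last_in_set[of q'] by simp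
      then show False using dq(1) by simp
    qed
    then show ?thesis using 1 q by simp
  next
    case 2
    have "p' = []"
    proof (rule ccontr)
      assume "p' \<noteq> []"
      then have "u \<in> set p'" using last_eq 2 last_in_set[of p'] by simp
      then show False using dp(1) by simp
    qed
    then show ?thesis using 2 q by simp
  next
    case 3
    then have "is_path V E p'" "is_path V E q'" using dp dq
      by (auto simp: is_path_iff_successively successively_Cons)
    moreover have "last p' = last q'" using last_eq 3 by simp
    ultimately have "p' = q'" using Cons.IH 3 by blast
    then show ?thesis using q by simp
  next
    case 4
    then have "last p' \<in> set q'" using last_eq by simp
    then have "\<exists>z\<in>set p'. z \<in> set q'" using 4 last_in_set by blast
    then obtain A c R where p': "p' = A @ c # R" and "c \<in> set q'"
      and A: "\<forall>y\<in>set A. y \<notin> set q'"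
      using split_list_first_prop[of p' "\<lambda>z. z \<in> set q'"] by blast
    from split_list[OF \<open>c \<in> set q'\<close>] obtain B R' where q': "q' = B @ c # R'" by blast
    have "A \<noteq> [] \<or> B \<noteq> []" using 4 p' q' by auto
    moreover have "set A \<inter> set B = {}" using A q' by auto
    moreover have "distinct (u # A @ [c])" "successively E (u # A @ [c])"
      using dp(1,2) successively_append_iff[of E "u # A @ [c]" R] unfolding p' by auto
    moreover have "distinct (u # B @ [c])" "successively E (u # B @ [c])"
      using dq(1,2) successively_append_iff[of E "u # B @ [c]" R'] unfolding q' by auto
    moreover have "set (u # A @ c # B) \<subseteq> V" using dp(3) dq(3) unfolding p' q' by auto
    ultimately have "is_cycle V E (u # A @ c # rev B)"
      using cycle_of_two_paths[OF G] by blast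
    then show ?thesis using T unfolding tree_def by blast
  qed
qed

section \<open>Rooted trees\<close>

locale rooted_tree =
  fixes V :: "'v set" and E :: "'v \<Rightarrow> 'v \<Rightarrow> bool" and r :: 'v
  assumes is_tree: "tree V E" and root_in_V: "r \<in> V"
begin

lemma is_graph: "graph V E"
  using is_tree by (simp add: tree_def)

definition root_path :: "'v \<Rightarrow> 'v list" where
  "root_path v = (THE p. is_path V E p \<and> hd p = r \<and> last p = v)"

lemma root_path:
  assumes "v \<in> V"
  shows "is_path V E (root_path v)" "hd (root_path v) = r" "last (root_path v) = v"
proof -
  have "connected_set V E V" using is_tree by (simp add: tree_def)
  then obtain p where p: "is_path V E p \<and> hd p = r \<and> last p = v"
    using root_in_V assms unfolding connected_set_def by blast
  have "is_path V E (root_path v) \<and> hd (root_path v) = r \<and> last (root_path v) = v"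
    unfolding root_path_def
  proof (rule theI[of _ p])
    fix q assume "is_path V E q \<and> hd q = r \<and> last q = v"
    then show "q = p" using p tree_path_unique[OF is_tree, of q p] by simp
  qed (rule p)
  then show "is_path V E (root_path v)" "hd (root_path v) = r" "last (root_path v) = v"
    by auto
qed

lemma root_path_unique:
  assumes "is_path V E p" "hd p = r"
  shows "root_path (last p) = p"
proof -
  have "last p \<in> V" using assms by (auto simp: is_path_def)
  then show ?thesis
    using root_path tree_path_unique[OF is_tree, of "root_path (last p)" p] assms by simp
qed

lemma root_pathD:
  assumes "v \<in> V"
  shows "root_path v \<noteq> []" "set (root_path v) \<subseteq> V" "distinct (root_path v)"
    "successively E (root_path v)"
  using root_path[OF assms] by (auto simp: is_path_iff_successively)

lemma self_in_root_path: "v \<in> V \<Longrightarrow> v \<in> set (root_path v)"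
  using root_path root_pathD by (metis last_in_set)

lemma root_path_nth:
  assumes "v \<in> V" "j < length (root_path v)"
  shows "root_path (root_path v ! j) = take (Suc j) (root_path v)"
proof -
  have "is_path V E (take (Suc j) (root_path v))"
    using is_path_take root_path(1)[OF assms(1)] assms(2) by blast
  moreover have "hd (take (Suc j) (root_path v)) = r"
    using root_path(2)[OF assms(1)] assms(2) by (simp add: hd_take)
  moreover have "last (take (Suc j) (root_path v)) = root_path v ! j"
    using assms(2) by (simp add: take_Suc_conv_app_nth)
  ultimately show ?thesis using root_path_unique by metis
qed

lemma mem_root_path:
  assumes "v \<in> V" "t \<in> set (root_path v)"
  shows "\<exists>k<length (root_path v). root_path v ! k = t \<and> root_path t = take (Suc k) (root_path v)"
proof -
  obtain k where "k < length (root_path v)" "root_path v ! k = t"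
    using assms(2) by (auto simp: in_set_conv_nth)
  then show ?thesis using root_path_nth[OF assms(1)] by blast
qed

lemma root_path_prefix:
  assumes "v \<in> V" "t \<in> set (root_path v)"
  shows "root_path t = take (length (root_path t)) (root_path v)"
  using mem_root_path[OF assms] by auto

lemma root_path_trans:
  assumes "v \<in> V" "t \<in> set (root_path v)" "s \<in> set (root_path t)"
  shows "s \<in> set (root_path v)"
  using root_path_prefix[OF assms(1,2)] assms(3) by (metis in_set_takeD)

lemma length_root_path_le:
  assumes "v \<in> V" "t \<in> set (root_path v)"
  shows "length (root_path t) \<le> length (root_path v)"
  using mem_root_path[OF assms] by auto

lemma root_path_antisym:
  assumes "v \<in> V" "u \<in> set (root_path v)" "v \<in> set (root_path u)"
  shows "u = v"
proof -
  have "u \<in> V" using assms(1,2) root_pathD(2) by blast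
  then have "length (root_path u) = length (root_path v)"
    using length_root_path_le assms by (meson le_antisym)
  then have "root_path u = root_path v" using root_path_prefix[OF assms(1,2)] by simp
  then show ?thesis using root_path(3) assms(1) \<open>u \<in> V\<close> by metis
qed

lemma length_root_path_less:
  assumes "v \<in> V" "x \<in> set (root_path v)" "v \<noteq> x"
  shows "length (root_path x) < length (root_path v)"
proof -
  have "x \<in> V" using assms(1,2) root_pathD(2) by blast
  have "length (root_path x) \<noteq> length (root_path v)"
  proof
    assume "length (root_path x) = length (root_path v)"
    then have "root_path x = root_path v" using root_path_prefix[OF assms(1,2)] by simp
    then show False using root_path(3) assms(1,3) \<open>x \<in> V\<close> by metis
  qed
  then show ?thesis using length_root_path_le[OF assms(1,2)] by simp
qed

lemma tree_le_iff_root_path: "tree_le V E r u v \<longleftrightarrow> v \<in> V \<and> u \<in> set (root_path v)"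
proof
  assume "tree_le V E r u v"
  then obtain p where p: "is_path V E p" "hd p = r" "last p = v" "u \<in> set p"
    unfolding tree_le_def by blast
  then have "root_path v = p" using root_path_unique by blast
  moreover have "v \<in> V" using p by (auto simp: is_path_def)
  ultimately show "v \<in> V \<and> u \<in> set (root_path v)" using p by simp
next
  assume "v \<in> V \<and> u \<in> set (root_path v)"
  then show "tree_le V E r u v" unfolding tree_le_def using root_path by blast
qed

lemma root_path_snoc:
  assumes "v \<in> V" "E v w" "w \<notin> set (root_path v)"
  shows "root_path w = root_path v @ [w]"
proof -
  have "is_path V E (root_path v @ [w])"
    using root_pathD[OF assms(1)] root_path[OF assms(1)] assms graph_edgeD[OF is_graph]
    by (auto simp: is_path_iff_successively successively_append_iff)
  moreover have "hd (root_path v @ [w]) = r"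
    using root_path[OF assms(1)] root_pathD[OF assms(1)] by simp
  ultimately show ?thesis using root_path_unique by fastforce
qed

lemma root_path_adjacent:
  assumes "E a b"
  shows "root_path b = root_path a @ [b] \<or> root_path a = root_path b @ [a]"
proof -
  have ab: "a \<in> V" "b \<in> V" "E b a" "a \<noteq> b" using graph_edgeD[OF is_graph assms] by blast+
  show ?thesis
  proof (cases "b \<in> set (root_path a)")
    case True
    then have "a \<notin> set (root_path b)" using root_path_antisym[OF ab(1)] ab(4) by blast
    then show ?thesis using root_path_snoc[OF ab(2,3)] by blast
  qed (use root_path_snoc[OF ab(1) assms] in blast)
qed

lemma children_iff_root_path:
  assumes "x \<in> V"
  shows "y \<in> children V E r x \<longleftrightarrow> E x y \<and> root_path y = root_path x @ [y]"
proof
  assume "y \<in> children V E r x"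
  then have y: "E x y" "y \<in> V" "x \<in> set (root_path y)" "x \<noteq> y"
    unfolding children_def tree_le_iff_root_path by auto
  then have "length (root_path x) < length (root_path y)" using length_root_path_less by blast
  then show "E x y \<and> root_path y = root_path x @ [y]" using root_path_adjacent[OF y(1)] y(1) by auto
next
  assume "E x y \<and> root_path y = root_path x @ [y]"
  moreover have "y \<in> V" "x \<noteq> y" using calculation graph_edgeD[OF is_graph] by blast+
  ultimately show "y \<in> children V E r x"
    using self_in_root_path[OF assms] unfolding children_def tree_le_iff_root_path by auto
qed

end

section \<open>Rays and ends\<close>

lemma ray_equiv_refl: "ray_equiv f f"
  unfolding ray_equiv_def by (rule exI[of _ 0], rule exI[of _ 0]) simp

lemma ray_equiv_sym: "ray_equiv f g \<Longrightarrow> ray_equiv g f"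
  unfolding ray_equiv_def by metis

lemma ray_equiv_trans:
  assumes "ray_equiv f g" "ray_equiv g h"
  shows "ray_equiv f h"
proof -
  obtain i j where fg: "\<And>k. f (i + k) = g (j + k)"
    using assms(1) unfolding ray_equiv_def by blast
  obtain i' j' where gh: "\<And>k. g (i' + k) = h (j' + k)"
    using assms(2) unfolding ray_equiv_def by blast
  have "f (i + i' + k) = h (j' + j + k)" for k
    using fg[of "i' + k"] gh[of "j + k"] by (simp add: ac_simps)
  then show ?thesis unfolding ray_equiv_def by blast
qed

lemma end_is_ray: "\<omega> \<in> ends V E \<Longrightarrow> g \<in> \<omega> \<Longrightarrow> is_ray V E g"
  unfolding ends_def by blast

lemma end_mem_iff:
  assumes "\<omega> \<in> ends V E" "g \<in> \<omega>"
  shows "h \<in> \<omega> \<longleftrightarrow> is_ray V E h \<and> ray_equiv g h"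
proof -
  obtain f where "\<omega> = {g. is_ray V E g \<and> ray_equiv f g}"
    using assms(1) unfolding ends_def by blast
  then show ?thesis using assms(2) ray_equiv_trans ray_equiv_sym by blast
qed

lemma end_nonempty: "\<omega> \<in> ends V E \<Longrightarrow> \<exists>f. f \<in> \<omega>"
  unfolding ends_def using ray_equiv_refl by blast

lemma ray_shift:
  assumes "is_ray V E f"
  shows "is_ray V E (\<lambda>k. f (n + k))" "ray_equiv f (\<lambda>k. f (n + k))"
proof -
  show "is_ray V E (\<lambda>k. f (n + k))"
    using assms unfolding is_ray_def inj_def by (auto simp del: upt_Suc) (metis add_left_cancel)
  show "ray_equiv f (\<lambda>k. f (n + k))"
    unfolding ray_equiv_def by (rule exI[of _ n], rule exI[of _ 0]) simp
qed

lemma end_shift: "\<omega> \<in> ends V E \<Longrightarrow> h \<in> \<omega> \<Longrightarrow> (\<lambda>k. h (n + k)) \<in> \<omega>"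
  using end_mem_iff end_is_ray ray_shift by blast

lemma is_ray_if_prefixes_are_paths:
  assumes "\<And>n. is_path V E (map g [0..<Suc n])"
  shows "is_ray V E g"
  unfolding is_ray_def
proof (intro conjI allI injI subsetI)
  fix a b assume "g a = g b"
  moreover have "distinct (map g [0..<Suc (a + b)])"
    using assms[of "a + b"] unfolding is_path_def by blast
  ultimately show "a = b" by (simp add: distinct_map inj_on_def del: upt_Suc)
next
  fix y assume "y \<in> range g"
  then obtain n where "y \<in> set (map g [0..<Suc n])" by auto
  then show "y \<in> V" using assms[of n] unfolding is_path_def by blast
next
  fix i
  have "successively E (map g [0..<Suc (Suc i)])"
    using assms[of "Suc i"] unfolding is_path_iff_successively by blast
  then show "E (g i) (g (Suc i))"
    using successively_nth[of E "map g [0..<Suc (Suc i)]" i] by (simp del: upt_Suc)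
qed

context rooted_tree
begin

lemma root_path_rooted_ray:
  assumes "is_ray V E g" "g 0 = r"
  shows "root_path (g n) = map g [0..<Suc n]"
proof -
  have "is_path V E (map g [0..<Suc n])"
    using assms(1) unfolding is_path_def is_ray_def
    by (auto simp: distinct_map inj_on_def inj_def nth_append simp del: upt_Suc)
  moreover have "hd (map g [0..<Suc n]) = r" using assms(2) by (simp add: hd_map del: upt_Suc)
  ultimately show ?thesis using root_path_unique by fastforce
qed

lemma mem_root_path_rooted_ray:
  assumes "is_ray V E g" "g 0 = r"
  shows "t \<in> set (root_path (g n)) \<longleftrightarrow> (\<exists>k\<le>n. g k = t)"
proof -
  have "set (map g [0..<Suc n]) = g ` {0..n}"
    by (simp only: set_map set_upt atLeastLessThanSuc_atLeastAtMost)
  then show ?thesis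
    using root_path_rooted_ray[OF assms, of n] by (simp del: upt_Suc) (auto simp: image_iff)
qed

text \<open>Once a ray steps away from the root it never steps back (that would revisit a vertex),
  and it cannot step towards the root forever.\<close>

lemma ray_eventually_ascends:
  assumes f: "is_ray V E f"
  obtains m where "\<And>j. root_path (f (Suc (m + j))) = root_path (f (m + j)) @ [f (Suc (m + j))]"
proof -
  have fV: "f n \<in> V" for n using f unfolding is_ray_def by blast
  have finj: "f a = f b \<Longrightarrow> a = b" for a b using f unfolding is_ray_def inj_def by blast
  define up where "up n \<longleftrightarrow> root_path (f (Suc n)) = root_path (f n) @ [f (Suc n)]" for n
  have down: "\<not> up n \<Longrightarrow> root_path (f n) = root_path (f (Suc n)) @ [f n]" for n
    using root_path_adjacent f unfolding up_def is_ray_def by meson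
  have up_Suc: "up n \<Longrightarrow> up (Suc n)" for n
  proof (rule ccontr)
    assume "up n" "\<not> up (Suc n)"
    then have "root_path (f (Suc (Suc n))) = root_path (f n)"
      using down[of "Suc n"] unfolding up_def by auto
    then have "f (Suc (Suc n)) = f n" using root_path(3)[OF fV] by metis
    then show False using finj by fastforce
  qed
  have "\<exists>m. up m"
  proof (rule ccontr)
    assume "\<nexists>m. up m"
    then have shorter: "length (root_path (f (Suc n))) < length (root_path (f n))" for n
      using down[of n] by auto
    have "length (root_path (f n)) + n \<le> length (root_path (f 0))" for n
    proof (induction n)
      case (Suc n)
      then show ?case using shorter[of n] by simp
    qed simp
    from this[of "Suc (length (root_path (f 0)))"] show False by simp
  qed
  then obtain m where "up m" by blast
  then have "up (m + j)" for j by (induction j) (use up_Suc in auto)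
  then show ?thesis using that unfolding up_def by auto
qed

text \<open>The rooted ray: the path from \<open>r\<close> to a vertex of \<open>f\<close> after which \<open>f\<close> only ascends,
  continued along \<open>f\<close>.\<close>

lemma rooted_ray_equiv:
  assumes f: "is_ray V E f"
  shows "\<exists>g. is_ray V E g \<and> g 0 = r \<and> ray_equiv f g"
proof -
  have fV: "f n \<in> V" for n using f unfolding is_ray_def by blast
  obtain m where ascend:
    "\<And>j. root_path (f (Suc (m + j))) = root_path (f (m + j)) @ [f (Suc (m + j))]"
    using ray_eventually_ascends[OF f] by blast
  define L where "L = length (root_path (f m))"
  have L: "L \<ge> 1" using root_pathD(1)[OF fV[of m]] L_def by (simp add: Suc_le_eq)
  define g where "g k = (if k < L then root_path (f m) ! k else f (m + (k + 1 - L)))" for k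
  have prefix: "root_path (f (m + j)) = map g [0..<L + j]" for j
  proof (induction j)
    case 0
    have "map g [0..<L] = map (\<lambda>k. root_path (f m) ! k) [0..<L]"
      by (rule map_cong) (auto simp: g_def)
    also have "\<dots> = root_path (f m)" unfolding L_def by (rule map_nth)
    finally show ?case by simp
  next
    case (Suc j)
    have "root_path (f (m + Suc j)) = root_path (f (m + j)) @ [f (m + Suc j)]"
      using ascend[of j] by simp
    also have "\<dots> = map g [0..<L + j] @ [g (L + j)]" using Suc L by (simp add: g_def)
    finally show ?case by simp
  qed
  have "is_path V E (map g [0..<Suc n])" for n
  proof -
    have "map g [0..<Suc n] = take (Suc n) (root_path (f (m + n)))"
      using L by (simp add: prefix take_map del: upt_Suc)
    moreover have "n < length (root_path (f (m + n)))" using L by (simp add: prefix)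
    ultimately show ?thesis using is_path_take[OF root_path(1)[OF fV]] by simp
  qed
  then have "is_ray V E g" by (rule is_ray_if_prefixes_are_paths)
  moreover have "g 0 = r"
    using L root_path(2)[OF fV[of m]] root_pathD(1)[OF fV[of m]] by (simp add: g_def hd_conv_nth)
  moreover have "f (m + k) = g (L - 1 + k)" for k
    using root_path(3)[OF fV, of "m + k"] L by (simp add: prefix last_map)
  then have "ray_equiv f g" unfolding ray_equiv_def by blast
  ultimately show ?thesis by blast
qed

lemma end_has_rooted_ray:
  assumes "\<omega> \<in> ends V E"
  obtains g where "g \<in> \<omega>" "g 0 = r" "is_ray V E g"
proof -
  obtain f where f: "f \<in> \<omega>" using end_nonempty[OF assms] by blast
  then obtain g where "is_ray V E g" "g 0 = r" "ray_equiv f g"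
    using rooted_ray_equiv end_is_ray[OF assms] by blast
  then show ?thesis using that end_mem_iff[OF assms f] by blast
qed

end

section \<open>Subtrees and basic regions at a vertex\<close>

context rooted_tree
begin

definition walk_within :: "'v set \<Rightarrow> 'v \<Rightarrow> 'v \<Rightarrow> bool" where
  "walk_within S u v \<longleftrightarrow>
    (\<exists>w. w \<noteq> [] \<and> successively E w \<and> set w \<subseteq> S \<and> hd w = u \<and> last w = v)"

lemma walk_within_sym: "walk_within S u v \<Longrightarrow> walk_within S v u"
proof -
  assume "walk_within S u v"
  then obtain w where "w \<noteq> []" "successively E w" "set w \<subseteq> S" "hd w = u" "last w = v"
    unfolding walk_within_def by blast
  moreover have "successively E (rev w)"
    using graph_successively_rev[OF is_graph] \<open>successively E w\<close> .
  ultimately show ?thesis unfolding walk_within_def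
    by (intro exI[of _ "rev w"]) (simp add: hd_rev last_rev)
qed

lemma walk_within_trans: "walk_within S u v \<Longrightarrow> walk_within S v z \<Longrightarrow> walk_within S u z"
proof -
  assume "walk_within S u v" "walk_within S v z"
  then obtain w1 w2
    where w1: "w1 \<noteq> []" "successively E w1" "set w1 \<subseteq> S" "hd w1 = u" "last w1 = v"
      and w2: "w2 \<noteq> []" "successively E w2" "set w2 \<subseteq> S" "hd w2 = v" "last w2 = z"
    unfolding walk_within_def by blast
  show "walk_within S u z"
  proof (cases "tl w2 = []")
    case True
    then have "z = v" using w2 by (metis last_ConsL list.collapse)
    then show ?thesis using w1 unfolding walk_within_def by blast
  next
    case False
    have w2': "w2 = v # tl w2" using w2 by (metis list.collapse)
    then have "E v (hd (tl w2))" "successively E (tl w2)" using w2(2) False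
      by (metis successively_Cons)+
    then have "successively E (w1 @ tl w2)" using w1 False by (auto simp: successively_append_iff)
    moreover have "set (tl w2) \<subseteq> set w2" by (cases w2) auto
    then have "set (w1 @ tl w2) \<subseteq> S" using w1(3) w2(3) by auto
    moreover have "last (w1 @ tl w2) = z" using False w2 w2' by (metis last_ConsR last_appendR)
    ultimately show ?thesis unfolding walk_within_def using w1
      by (intro exI[of _ "w1 @ tl w2"]) auto
  qed
qed

lemma connected_set_if_walks_from:
  assumes "S \<subseteq> V" "c \<in> S" "\<And>v. v \<in> S \<Longrightarrow> walk_within S c v"
  shows "connected_set V E S"
  unfolding connected_set_def
proof (intro conjI ballI)
  fix u v assume "u \<in> S" "v \<in> S"
  then have "walk_within S u v" using assms walk_within_sym walk_within_trans by blast
  then obtain w where w: "w \<noteq> []" "successively E w" "set w \<subseteq> S" "hd w = u" "last w = v"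
    unfolding walk_within_def by blast
  then obtain p where "p \<noteq> [] \<and> distinct p \<and> successively E p \<and> set p \<subseteq> set w \<and>
      hd p = hd w \<and> last p = last w"
    using walk_contains_path by blast
  then show "\<exists>p. is_path V E p \<and> set p \<subseteq> S \<and> hd p = u \<and> last p = v"
    using w assms(1) by (intro exI[of _ p]) (auto simp: is_path_iff_successively)
qed (use assms in blast)

lemma root_path_drop:
  assumes "v \<in> V" "k < length (root_path v)"
  shows "successively E (drop k (root_path v))" "drop k (root_path v) \<noteq> []"
    "hd (drop k (root_path v)) = root_path v ! k" "last (drop k (root_path v)) = v"
    "\<And>w. w \<in> set (drop k (root_path v)) \<Longrightarrow> \<exists>j. k \<le> j \<and> j < length (root_path v) \<and>
      root_path v ! j = w \<and> root_path w = take (Suc j) (root_path v)"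
proof -
  have "successively E (take k (root_path v) @ drop k (root_path v))"
    using root_pathD(4)[OF assms(1)] by simp
  then show "successively E (drop k (root_path v))" using successively_append_iff by blast
  show "drop k (root_path v) \<noteq> []" using assms by simp
  show "hd (drop k (root_path v)) = root_path v ! k" using assms by (simp add: hd_drop_conv_nth)
  show "last (drop k (root_path v)) = v" using assms root_path(3)[OF assms(1)] by simp
  fix w assume "w \<in> set (drop k (root_path v))"
  then obtain i where "i < length (root_path v) - k" "drop k (root_path v) ! i = w"
    by (auto simp: in_set_conv_nth)
  then show "\<exists>j. k \<le> j \<and> j < length (root_path v) \<and>
      root_path v ! j = w \<and> root_path w = take (Suc j) (root_path v)"
    using root_path_nth[OF assms(1), of "k + i"] by (intro exI[of _ "k + i"]) auto
qed

lemma connected_set_if_closed_along_root_paths: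
  assumes "S \<subseteq> V" "c \<in> S"
    and above: "\<And>v. v \<in> S \<Longrightarrow> c \<in> set (root_path v)"
    and closed: "\<And>v w. v \<in> S \<Longrightarrow> w \<in> set (root_path v) \<Longrightarrow> c \<in> set (root_path w) \<Longrightarrow> w \<in> S"
  shows "connected_set V E S"
proof (rule connected_set_if_walks_from[OF assms(1,2)])
  fix v assume v: "v \<in> S"
  then have vV: "v \<in> V" using assms(1) by blast
  obtain k where k: "k < length (root_path v)" "root_path v ! k = c"
    using above[OF v] by (auto simp: in_set_conv_nth)
  note d = root_path_drop[OF vV k(1)]
  have "set (drop k (root_path v)) \<subseteq> S"
  proof
    fix w assume w: "w \<in> set (drop k (root_path v))"
    then obtain j where "k \<le> j" "root_path w = take (Suc j) (root_path v)" using d(5) by blast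
    then have "c \<in> set (root_path w)" using k by (auto simp: in_set_conv_nth intro!: exI[of _ k])
    then show "w \<in> S" using closed[OF v in_set_dropD[OF w]] by blast
  qed
  then show "walk_within S c v" unfolding walk_within_def using d k by blast
qed

definition subtree :: "'v \<Rightarrow> 'v set" where
  "subtree t = {v \<in> V. t \<in> set (root_path v)}"

text \<open>For \<open>x\<close> strictly below \<open>v\<close> this is the child of \<open>x\<close> on the path to \<open>v\<close>; otherwise it is
  a junk value.\<close>

definition child_towards :: "'v \<Rightarrow> 'v \<Rightarrow> 'v" where
  "child_towards x v = root_path v ! length (root_path x)"

text \<open>The vertex \<open>x\<close> together with \<open>\<lceil>t\<rceil> \<inter> V\<close> for the children \<open>t \<notin> F\<close> of \<open>x\<close>; for finite \<open>F\<close>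
  these give the basic neighbourhoods of \<open>x\<close>.\<close>

definition vertex_region :: "'v \<Rightarrow> 'v set \<Rightarrow> 'v set" where
  "vertex_region x F = {v \<in> V. x \<in> set (root_path v) \<and> (v = x \<or> child_towards x v \<notin> F)}"

lemma child_towards:
  assumes "v \<in> V" "x \<in> set (root_path v)" "v \<noteq> x"
  shows "child_towards x v \<in> children V E r x" "v \<in> subtree (child_towards x v)"
proof -
  have xV: "x \<in> V" using assms root_pathD(2) by blast
  have l: "length (root_path x) < length (root_path v)" using length_root_path_less[OF assms] .
  have pre: "root_path x = take (length (root_path x)) (root_path v)"
    using root_path_prefix[OF assms(1,2)] .
  have "root_path (child_towards x v) = take (Suc (length (root_path x))) (root_path v)"
    unfolding child_towards_def using root_path_nth[OF assms(1) l] .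
  also have "\<dots> = root_path x @ [child_towards x v]"
    using l pre by (simp add: take_Suc_conv_app_nth child_towards_def)
  finally have snoc: "root_path (child_towards x v) = root_path x @ [child_towards x v]" .
  have lx: "length (root_path x) \<ge> 1" using root_pathD(1)[OF xV] by (simp add: Suc_le_eq)
  have "E (root_path v ! (length (root_path x) - 1)) (root_path v ! Suc (length (root_path x) - 1))"
    using root_path(1)[OF assms(1)] l lx unfolding is_path_def by simp
  moreover have "root_path v ! (length (root_path x) - 1) = x"
  proof -
    have "root_path v ! (length (root_path x) - 1) = root_path x ! (length (root_path x) - 1)"
      using pre lx l by (metis diff_less less_numeral_extra(1) nth_take order_less_le_trans)
    also have "\<dots> = x" using root_path(3)[OF xV] root_pathD(1)[OF xV] by (simp add: last_conv_nth)
    finally show ?thesis .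
  qed
  moreover have "Suc (length (root_path x) - 1) = length (root_path x)" using lx by simp
  ultimately have "E x (child_towards x v)" unfolding child_towards_def by metis
  then show "child_towards x v \<in> children V E r x" using children_iff_root_path[OF xV] snoc by blast
  show "v \<in> subtree (child_towards x v)"
    unfolding subtree_def child_towards_def using assms(1) l by simp
qed

lemma child_towards_prefix:
  assumes "v \<in> V" "w \<in> set (root_path v)" "length (root_path x) < length (root_path w)"
  shows "child_towards x w = child_towards x v"
  unfolding child_towards_def using nth_take[OF assms(3)] root_path_prefix[OF assms(1,2)] by metis

lemma subtree_of_child:
  assumes "x \<in> V" "t \<in> children V E r x" "v \<in> subtree t"
  shows "v \<noteq> x" "x \<in> set (root_path v)" "child_towards x v = t"
proof -
  have t: "root_path t = root_path x @ [t]"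
    using children_iff_root_path[OF assms(1)] assms(2) by auto
  have v: "v \<in> V" "t \<in> set (root_path v)" using assms(3) subtree_def by auto
  show "x \<in> set (root_path v)" using root_path_trans[OF v] t self_in_root_path[OF assms(1)] by simp
  have "t \<notin> set (root_path x)" using root_pathD(3)[of t] t v root_pathD(2) by fastforce
  then show "v \<noteq> x" using v by auto
  have "root_path t = take (length (root_path t)) (root_path v)" using root_path_prefix[OF v] .
  then have "root_path v ! length (root_path x) = t" using t
    by (metis length_append_singleton lessI nth_append_length nth_take)
  then show "child_towards x v = t" unfolding child_towards_def .
qed

lemma subtree_subset_vertex_region:
  assumes "x \<in> V" "t \<in> children V E r x" "t \<notin> F"
  shows "subtree t \<subseteq> vertex_region x F"
  using subtree_of_child[OF assms(1,2)] assms(3) unfolding vertex_region_def subtree_def by auto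

lemma subtree_disjoint_vertex_region:
  assumes "x \<in> V" "t \<in> children V E r x"
  shows "subtree t \<inter> vertex_region x {t} = {}"
  using subtree_of_child[OF assms] unfolding vertex_region_def by auto

lemma vertex_region_antimono: "F \<subseteq> F' \<Longrightarrow> vertex_region x F' \<subseteq> vertex_region x F"
  unfolding vertex_region_def by auto

lemma self_in_vertex_region: "x \<in> V \<Longrightarrow> x \<in> vertex_region x F"
  unfolding vertex_region_def using self_in_root_path by blast

lemma connected_subtree: "t \<in> V \<Longrightarrow> connected_set V E (subtree t)"
  by (rule connected_set_if_closed_along_root_paths)
    (use self_in_root_path root_pathD(2) in \<open>auto simp: subtree_def\<close>)

lemma connected_vertex_region:
  assumes x: "x \<in> V"
  shows "connected_set V E (vertex_region x F)"
proof (rule connected_set_if_closed_along_root_paths)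
  fix v w assume v: "v \<in> vertex_region x F" and w: "w \<in> set (root_path v)" "x \<in> set (root_path w)"
  then have vV: "v \<in> V" and wV: "w \<in> V" unfolding vertex_region_def using root_pathD(2) by auto
  show "w \<in> vertex_region x F"
  proof (cases "w = x")
    case False
    then have "v \<noteq> x" using w root_path_antisym[OF x] by blast
    then have "child_towards x v \<notin> F" using v unfolding vertex_region_def by blast
    moreover have "child_towards x w = child_towards x v"
      using child_towards_prefix[OF vV w(1) length_root_path_less[OF wV w(2) False]] .
    ultimately show ?thesis using wV w(2) unfolding vertex_region_def by simp
  qed (use self_in_vertex_region[OF x] in simp)
qed (use self_in_vertex_region[OF x] in \<open>auto simp: vertex_region_def\<close>)

lemma subtree_boundary:
  "{(a, b). a \<in> subtree t \<and> b \<notin> subtree t \<and> E a b} \<subseteq> {(t, last (butlast (root_path t)))}"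
proof clarify
  fix a b assume ab: "a \<in> subtree t" "b \<notin> subtree t" "E a b"
  have V: "a \<in> V" "b \<in> V" using graph_edgeD[OF is_graph ab(3)] by blast+
  have ta: "t \<in> set (root_path a)" using ab subtree_def by blast
  show "a = t \<and> b = last (butlast (root_path t))"
  proof (cases "root_path b = root_path a @ [b]")
    case True
    then show ?thesis using ta ab V subtree_def by auto
  next
    case False
    then have ra: "root_path a = root_path b @ [a]" using root_path_adjacent[OF ab(3)] by blast
    have "t \<notin> set (root_path b)" using ab V subtree_def by auto
    then have "t = a" using ta ra by auto
    then show ?thesis using ra root_path(3)[OF V(2)] by simp
  qed
qed

lemma vertex_region_boundary:
  assumes x: "x \<in> V"
  shows "{(a, b). a \<in> vertex_region x F \<and> b \<notin> vertex_region x F \<and> E a b} \<subseteq>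
    Pair x ` (F \<union> {last (butlast (root_path x))})"
proof clarify
  fix a b assume ab: "a \<in> vertex_region x F" "b \<notin> vertex_region x F" "E a b"
  have V: "a \<in> V" "b \<in> V" using graph_edgeD[OF is_graph ab(3)] by blast+
  have xa: "x \<in> set (root_path a)" and a: "a = x \<or> child_towards x a \<notin> F"
    using ab(1) unfolding vertex_region_def by auto
  consider "root_path b = root_path a @ [b]" | "root_path a = root_path b @ [a]"
    using root_path_adjacent[OF ab(3)] by blast
  then show "(a, b) \<in> Pair x ` (F \<union> {last (butlast (root_path x))})"
  proof cases
    case 1
    then have "b \<noteq> x" "child_towards x b \<in> F"
      using ab(2) V(2) xa unfolding vertex_region_def by auto
    moreover have "a = x"
    proof (rule ccontr)
      assume "a \<noteq> x"
      moreover have "a \<in> set (root_path b)" using 1 self_in_root_path[OF V(1)] by simp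
      ultimately have "child_towards x a = child_towards x b"
        using child_towards_prefix[OF V(2) _ length_root_path_less[OF V(1) xa]] by blast
      then show False using a \<open>a \<noteq> x\<close> \<open>child_towards x b \<in> F\<close> by simp
    qed
    moreover have "child_towards x b = b" using 1 \<open>a = x\<close> by (simp add: child_towards_def)
    ultimately show ?thesis by auto
  next
    case 2
    show ?thesis
    proof (cases "a = x")
      case False
      then have xb: "x \<in> set (root_path b)" using xa 2 by simp
      have "b \<noteq> x" using ab(2) self_in_vertex_region[OF x] by blast
      have "b \<in> set (root_path a)" using 2 self_in_root_path[OF V(2)] by simp
      then have "child_towards x b = child_towards x a"
        by (rule child_towards_prefix[OF V(1) _ length_root_path_less[OF V(2) xb \<open>b \<noteq> x\<close>]])
      then have "b \<in> vertex_region x F" using a False V(2) xb by (simp add: vertex_region_def)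
      then show ?thesis using ab(2) by blast
    qed (use 2 root_path(3)[OF V(2)] in simp)
  qed
qed

lemma region_subtree: "t \<in> V \<Longrightarrow> region V E (subtree t)"
  unfolding region_def
  using connected_subtree finite_subset[OF subtree_boundary] self_in_root_path subtree_def
  by auto

lemma region_vertex_region: "x \<in> V \<Longrightarrow> finite F \<Longrightarrow> region V E (vertex_region x F)"
  unfolding region_def
  using connected_vertex_region finite_subset[OF vertex_region_boundary] self_in_vertex_region
  by blast

end

section \<open>Neighbourhood bases in the end topology\<close>

lemma topology_generated_by_local_base:
  assumes "openin (topology_generated_by \<S>) W" "p \<in> W"
    and base: "\<And>S. S \<in> \<S> \<Longrightarrow> p \<in> S \<Longrightarrow> \<exists>i\<in>I. N i \<subseteq> S"
    and directed: "\<And>i j. i \<in> I \<Longrightarrow> j \<in> I \<Longrightarrow> \<exists>k\<in>I. N k \<subseteq> N i \<inter> N j"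
  shows "\<exists>i\<in>I. N i \<subseteq> W"
  using openin_topology_generated_by[OF assms(1)] assms(2)
proof (induction rule: generate_topology_on.induct)
  case (Int a b)
  then obtain i j where "i \<in> I" "N i \<subseteq> a" "j \<in> I" "N j \<subseteq> b" by blast
  then show ?case using directed[of i j] by blast
next
  case (UN K)
  then obtain k where "k \<in> K" "p \<in> k" by blast
  then show ?case using UN.IH by blast
qed (use base in auto)

lemma first_countable_subtopologyI:
  assumes "\<And>x. x \<in> X \<Longrightarrow> \<exists>B. countable B \<and> (\<forall>b\<in>B. openin T b \<and> x \<in> b) \<and>
    (\<forall>W. openin T W \<and> x \<in> W \<longrightarrow> (\<exists>b\<in>B. b \<inter> X \<subseteq> W))"
  shows "first_countable (subtopology T X)"
  unfolding first_countable_def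
proof
  fix x assume "x \<in> topspace (subtopology T X)"
  then have "x \<in> X" by simp
  then obtain B where B: "countable B" "\<forall>b\<in>B. openin T b \<and> x \<in> b"
    "\<forall>W. openin T W \<and> x \<in> W \<longrightarrow> (\<exists>b\<in>B. b \<inter> X \<subseteq> W)"
    using assms[OF \<open>x \<in> X\<close>] by (elim exE conjE)
  show "\<exists>B'. countable B' \<and> (\<forall>b\<in>B'. openin (subtopology T X) b) \<and>
    (\<forall>U. openin (subtopology T X) U \<and> x \<in> U \<longrightarrow> (\<exists>b\<in>B'. x \<in> b \<and> b \<subseteq> U))"
  proof (intro exI[of _ "(\<lambda>b. b \<inter> X) ` B"] conjI ballI allI impI)
    show "countable ((\<lambda>b. b \<inter> X) ` B)" using B(1) by blast
  next
    fix b assume "b \<in> (\<lambda>b. b \<inter> X) ` B"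
    then obtain b' where "b' \<in> B" "b = b' \<inter> X" by blast
    then show "openin (subtopology T X) b" using B(2) openin_subtopology_Int by blast
  next
    fix U assume "openin (subtopology T X) U \<and> x \<in> U"
    then obtain W where W: "openin T W" "x \<in> W" "U = W \<inter> X" unfolding openin_subtopology by blast
    then obtain b where "b \<in> B" "b \<inter> X \<subseteq> W" using B(3) by blast
    then show "\<exists>b\<in>(\<lambda>b. b \<inter> X) ` B. x \<in> b \<and> b \<subseteq> U"
      using B(2) W(3) \<open>x \<in> X\<close> by (intro bexI[of _ "b \<inter> X"]) auto
  qed
qed

lemma region_points_mono: "S \<subseteq> S' \<Longrightarrow> region_points V E S \<subseteq> region_points V E S'"
  unfolding region_points_def by (intro Un_mono image_mono Collect_mono) (assumption, blast)

lemma Inl_in_region_points [simp]: "Inl v \<in> region_points V E S \<longleftrightarrow> v \<in> S"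
  unfolding region_points_def by auto

lemma Inr_in_region_points [simp]:
  "Inr \<omega> \<in> region_points V E S \<longleftrightarrow> \<omega> \<in> ends V E \<and> (\<exists>f\<in>\<omega>. range f \<subseteq> S)"
  unfolding region_points_def by auto

lemma Inr_in_up_closure [simp]:
  "Inr \<omega> \<in> up_closure V E r t \<longleftrightarrow> \<omega> \<in> ends V E \<and> (\<exists>f\<in>\<omega>. f 0 = r \<and> t \<in> range f)"
  unfolding up_closure_def by auto

lemma openin_region_points:
  "region V E S \<Longrightarrow> openin (end_topology V E) (region_points V E S)"
  unfolding end_topology_def by (rule topology_generated_by_Basis) blast

lemma region_points_disjoint:
  assumes "S \<inter> S' = {}"
  shows "region_points V E S \<inter> region_points V E S' = {}"
proof -
  have False if p: "p \<in> region_points V E S" "p \<in> region_points V E S'" for p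
  proof (cases p)
    case (Inr \<omega>)
    then obtain f h where fh: "\<omega> \<in> ends V E" "f \<in> \<omega>" "range f \<subseteq> S" "h \<in> \<omega>" "range h \<subseteq> S'"
      using p by auto
    then obtain i j where "f (i + 0) = h (j + 0)"
      using end_mem_iff[OF fh(1,2)] unfolding ray_equiv_def by blast
    then show False using fh(3,5) assms by (metis disjoint_iff range_subsetD)
  qed (use p assms in auto)
  then show ?thesis by blast
qed

context rooted_tree
begin

lemma Inl_in_up_closure [simp]: "Inl v \<in> up_closure V E r t \<longleftrightarrow> v \<in> subtree t"
  unfolding up_closure_def subtree_def tree_le_iff_root_path by auto

text \<open>A child whose subtree is not contained in \<open>S\<close> is the child of \<open>x\<close> towards an edge
  leaving \<open>S\<close>, so there are only finitely many such children.\<close>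

lemma vertex_region_subset_region:
  assumes x: "x \<in> V" and S: "region V E S" "x \<in> S"
  shows "\<exists>F. finite F \<and> vertex_region x F \<subseteq> S"
proof -
  define L where "L = {(a, b). a \<in> S \<and> b \<notin> S \<and> E a b}"
  have "finite L" using S unfolding region_def L_def by blast
  define F where "F = {t \<in> children V E r x. \<not> subtree t \<subseteq> S}"
  have "F \<subseteq> (\<lambda>e. root_path (snd e) ! length (root_path x)) ` L"
  proof
    fix t assume "t \<in> F"
    then obtain v where v: "v \<in> subtree t" "v \<notin> S" and t: "t \<in> children V E r x"
      unfolding F_def by blast
    note v_t = subtree_of_child[OF x t v(1)]
    have vV: "v \<in> V" using v subtree_def by blast
    obtain k where k: "k < length (root_path v)" "root_path v ! k = x"
      "root_path x = take (Suc k) (root_path v)"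
      using mem_root_path[OF vV v_t(2)] by blast
    note d = root_path_drop[OF vV k(1)]
    have "hd (drop k (root_path v)) \<in> S" "last (drop k (root_path v)) \<notin> S"
      using d(3,4) k(2) S(2) v(2) by simp_all
    then obtain a b where ab: "a \<in> S" "b \<notin> S" "E a b" "b \<in> set (drop k (root_path v))"
      using walk_leaves_set[OF d(1) d(2)] by blast
    then obtain j where j: "k \<le> j" "root_path b = take (Suc j) (root_path v)" "root_path v ! j = b"
      using d(5) by blast
    have "j \<noteq> k" using j k ab S(2) by auto
    then have "root_path b ! length (root_path x) = root_path v ! length (root_path x)"
      using j k by simp
    also have "\<dots> = t" using v_t(3) unfolding child_towards_def .
    finally show "t \<in> (\<lambda>e. root_path (snd e) ! length (root_path x)) ` L"
      using ab unfolding L_def by (intro image_eqI[of _ _ "(a, b)"]) auto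
  qed
  then have "finite F" by (rule finite_surj[OF \<open>finite L\<close>])
  moreover have "vertex_region x F \<subseteq> S"
  proof
    fix v assume v: "v \<in> vertex_region x F"
    show "v \<in> S"
    proof (cases "v = x")
      case False
      then have "v \<in> V" "x \<in> set (root_path v)" "child_towards x v \<notin> F"
        using v unfolding vertex_region_def by auto
      then show ?thesis
        using child_towards[OF \<open>v \<in> V\<close> \<open>x \<in> set (root_path v)\<close> False] unfolding F_def by blast
    qed (use S(2) in simp)
  qed
  ultimately show ?thesis by blast
qed

lemma vertex_region_in_open:
  assumes x: "x \<in> V" and W: "openin (end_topology V E) W" "Inl x \<in> W"
  shows "\<exists>F. finite F \<and> region_points V E (vertex_region x F) \<subseteq> W"
proof -
  have "\<exists>F\<in>Collect finite. region_points V E (vertex_region x F) \<subseteq> W"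
  proof (rule topology_generated_by_local_base)
    show "openin (topology_generated_by {region_points V E S |S. region V E S}) W"
      using W(1) unfolding end_topology_def .
    show "\<exists>F\<in>Collect finite. region_points V E (vertex_region x F) \<subseteq> U"
      if U: "U \<in> {region_points V E S |S. region V E S}" "Inl x \<in> U" for U
    proof -
      obtain S where S: "region V E S" "U = region_points V E S" using U(1) by blast
      then obtain F where "finite F" "vertex_region x F \<subseteq> S"
        using vertex_region_subset_region[OF x] U(2) by auto
      then show ?thesis using S(2) region_points_mono by blast
    qed
    show "\<exists>H\<in>Collect finite. region_points V E (vertex_region x H) \<subseteq>
        region_points V E (vertex_region x F) \<inter> region_points V E (vertex_region x G)"
      if "F \<in> Collect finite" "G \<in> Collect finite" for F G
      using that
      by (intro bexI[of _ "F \<union> G"] Int_greatest region_points_mono vertex_region_antimono) auto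
  qed (use W(2) in simp)
  then show ?thesis by blast
qed

lemma subtree_antimono_rooted_ray:
  assumes g: "is_ray V E g" "g 0 = r" and "n \<le> m"
  shows "subtree (g m) \<subseteq> subtree (g n)"
proof
  fix v assume v: "v \<in> subtree (g m)"
  have "g n \<in> set (root_path (g m))" using mem_root_path_rooted_ray[OF g] assms(3) by blast
  then show "v \<in> subtree (g n)" using v root_path_trans unfolding subtree_def by blast
qed

lemma rooted_ray_tail_in_subtree:
  assumes f: "is_ray V E f" "f 0 = r"
  shows "range (\<lambda>k. f (m + k)) \<subseteq> subtree (f m)"
proof clarify
  fix k
  have "f (m + k) \<in> V" using f unfolding is_ray_def by blast
  moreover have "f m \<in> set (root_path (f (m + k)))"
    unfolding mem_root_path_rooted_ray[OF f] by (rule exI[of _ m]) simp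
  ultimately show "f (m + k) \<in> subtree (f m)" unfolding subtree_def by blast
qed

lemma end_in_subtree:
  assumes g: "is_ray V E g" "g 0 = r" and \<omega>: "\<omega> \<in> ends V E" "g \<in> \<omega>"
  shows "Inr \<omega> \<in> region_points V E (subtree (g n))"
proof -
  have "(\<lambda>k. g (n + k)) \<in> \<omega>" using end_shift[OF \<omega>] .
  then show ?thesis using rooted_ray_tail_in_subtree[OF g, of n] \<omega>(1) by auto
qed

text \<open>Only finitely many edges leave a region, and the rooted ray eventually lies above all
  of them.\<close>

lemma subtree_subset_region:
  assumes g: "is_ray V E g" "g 0 = r" "ray_equiv g h"
    and S: "region V E S" "range h \<subseteq> S"
  shows "\<exists>n. subtree (g n) \<subseteq> S"
proof -
  obtain i j where ij: "\<And>k. g (i + k) = h (j + k)" using g(3) unfolding ray_equiv_def by blast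
  define L where "L = {(a, b). a \<in> S \<and> b \<notin> S \<and> E a b}"
  have "finite L" using S unfolding region_def L_def by blast
  then have "finite ((\<lambda>e. length (root_path (snd e))) ` L)" by simp
  then obtain M where M: "\<And>e. e \<in> L \<Longrightarrow> length (root_path (snd e)) \<le> M"
    unfolding finite_nat_set_iff_bounded_le by blast
  define n where "n = i + M"
  have gn: "g n \<in> S" using ij[of M] S(2) unfolding n_def by auto
  have "subtree (g n) \<subseteq> S"
  proof
    fix v assume v: "v \<in> subtree (g n)"
    show "v \<in> S"
    proof (rule ccontr)
      assume "v \<notin> S"
      have vV: "v \<in> V" "g n \<in> set (root_path v)" using v subtree_def by auto
      obtain k where k: "k < length (root_path v)" "root_path v ! k = g n"
        "root_path (g n) = take (Suc k) (root_path v)"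
        using mem_root_path[OF vV] by blast
      have "length (root_path (g n)) = Suc n" using root_path_rooted_ray[OF g(1,2)] by simp
      then have "k = n" using k(1,3) by simp
      note d = root_path_drop[OF vV(1) k(1)]
      have "hd (drop k (root_path v)) \<in> S" "last (drop k (root_path v)) \<notin> S"
        using d(3,4) k(2) gn \<open>v \<notin> S\<close> by simp_all
      then obtain a b where ab: "a \<in> S" "b \<notin> S" "E a b" "b \<in> set (drop k (root_path v))"
        using walk_leaves_set[OF d(1) d(2)] by blast
      then obtain j' where
        "k \<le> j'" "j' < length (root_path v)" "root_path b = take (Suc j') (root_path v)"
        using d(5) by blast
      moreover have "length (root_path b) \<le> M" using M[of "(a, b)"] ab unfolding L_def by simp
      ultimately show False using \<open>k = n\<close> unfolding n_def by simp
    qed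
  qed
  then show ?thesis by blast
qed

lemma subtree_in_open:
  assumes g: "is_ray V E g" "g 0 = r" and \<omega>: "\<omega> \<in> ends V E" "g \<in> \<omega>"
    and W: "openin (end_topology V E) W" "Inr \<omega> \<in> W"
  shows "\<exists>n. region_points V E (subtree (g n)) \<subseteq> W"
proof -
  have "\<exists>n\<in>UNIV. region_points V E (subtree (g n)) \<subseteq> W"
  proof (rule topology_generated_by_local_base)
    show "openin (topology_generated_by {region_points V E S |S. region V E S}) W"
      using W(1) unfolding end_topology_def .
    show "\<exists>n\<in>UNIV. region_points V E (subtree (g n)) \<subseteq> U"
      if U: "U \<in> {region_points V E S |S. region V E S}" "Inr \<omega> \<in> U" for U
    proof -
      obtain S h where "U = region_points V E S" "region V E S" "h \<in> \<omega>" "range h \<subseteq> S"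
        using U by auto
      moreover have "ray_equiv g h" using end_mem_iff[OF \<omega>] \<open>h \<in> \<omega>\<close> by blast
      ultimately obtain n where "subtree (g n) \<subseteq> S" using subtree_subset_region[OF g] by blast
      then show ?thesis using \<open>U = region_points V E S\<close> region_points_mono by blast
    qed
    show "\<exists>k\<in>UNIV. region_points V E (subtree (g k)) \<subseteq>
        region_points V E (subtree (g m)) \<inter> region_points V E (subtree (g n))" for m n
      by (intro bexI[of _ "max m n"] Int_greatest region_points_mono
          subtree_antimono_rooted_ray[OF g]) auto
  qed (use W(2) in simp)
  then show ?thesis by blast
qed

lemma up_closure_subset_subtree:
  "up_closure V E r t \<subseteq> region_points V E (subtree t)"
proof
  fix p assume p: "p \<in> up_closure V E r t"
  show "p \<in> region_points V E (subtree t)"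
  proof (cases p)
    case (Inr \<omega>)
    then obtain f m where f: "\<omega> \<in> ends V E" "f \<in> \<omega>" "f 0 = r" "f m = t" using p by auto
    have "(\<lambda>k. f (m + k)) \<in> \<omega>" using end_shift[OF f(1,2)] .
    moreover have "range (\<lambda>k. f (m + k)) \<subseteq> subtree t"
      using rooted_ray_tail_in_subtree[OF end_is_ray[OF f(1,2)] f(3), of m] f(4) by simp
    ultimately show ?thesis using Inr f(1) by auto
  qed (use p in simp)
qed

lemma up_closure_subset_vertex_region:
  assumes "x \<in> V" "t \<in> children V E r x" "t \<notin> F"
  shows "up_closure V E r t \<subseteq> region_points V E (vertex_region x F)"
  using up_closure_subset_subtree region_points_mono[OF subtree_subset_vertex_region[OF assms]]
  by blast

lemma up_closure_disjoint_vertex_region: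
  assumes "x \<in> V" "t \<in> children V E r x"
  shows "up_closure V E r t \<inter> region_points V E (vertex_region x {t}) = {}"
  using up_closure_subset_subtree
    region_points_disjoint[OF subtree_disjoint_vertex_region[OF assms]]
  by blast

lemma vertex_region_ray_tail:
  assumes x: "x \<in> V" and h: "is_ray V E h" "range h \<subseteq> vertex_region x G"
  obtains n c where "c \<in> children V E r x" "c \<notin> G" "\<And>k. h (n + k) \<in> subtree c"
proof -
  have inj: "h a = h b \<Longrightarrow> a = b" for a b using h unfolding is_ray_def inj_def by blast
  obtain n where n: "\<And>k. h (n + k) \<noteq> x"
  proof (cases "\<exists>i. h i = x")
    case True
    then obtain i where "h i = x" by blast
    then have "h (Suc i + k) \<noteq> x" for k using inj[of "Suc i + k" i] by auto
    then show ?thesis using that by blast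
  qed (use that in blast)
  have U: "h m \<in> V" "x \<in> set (root_path (h m))" "h m = x \<or> child_towards x (h m) \<notin> G" for m
    using h(2) unfolding vertex_region_def by blast+
  define c where "c = child_towards x (h n)"
  have same_child: "child_towards x (h (n + k)) = c" for k
  proof (induction k)
    case (Suc k)
    let ?a = "h (n + k)" and ?b = "h (n + Suc k)"
    have edge: "E ?a ?b" using h unfolding is_ray_def by simp
    have "length (root_path x) < length (root_path ?a)"
      "length (root_path x) < length (root_path ?b)"
      using length_root_path_less U n by blast+
    then have "child_towards x ?b = child_towards x ?a"
      using root_path_adjacent[OF edge] unfolding child_towards_def by (auto simp: nth_append)
    then show ?case using Suc by simp
  qed (simp add: c_def)
  have "c \<in> children V E r x" "c \<notin> G"
    using child_towards(1)[OF U(1,2)] U(3)[of n] n[of 0] unfolding c_def by auto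
  moreover have "h (n + k) \<in> subtree c" for k
    using child_towards(2) U n same_child by metis
  ultimately show ?thesis using that by blast
qed

lemma end_in_up_closure:
  assumes \<omega>: "\<omega> \<in> ends V E" "h \<in> \<omega>" and tail: "\<And>k. h (n + k) \<in> subtree c"
  shows "Inr \<omega> \<in> up_closure V E r c"
proof -
  obtain g where g: "g \<in> \<omega>" "g 0 = r" "is_ray V E g" using end_has_rooted_ray[OF \<omega>(1)] by blast
  have "ray_equiv g h" using end_mem_iff[OF \<omega>(1) g(1)] \<omega>(2) by blast
  then obtain i j where ij: "\<And>k. g (i + k) = h (j + k)" unfolding ray_equiv_def by blast
  have "g (i + n) \<in> subtree c" using ij[of n] tail[of j] by (simp add: add.commute)
  then have "c \<in> set (root_path (g (i + n)))" unfolding subtree_def by blast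
  then have "c \<in> range g" by (auto simp: mem_root_path_rooted_ray[OF g(3,2)])
  then show ?thesis using g \<omega>(1) by auto
qed

lemma region_points_vertex_region_subset:
  assumes x: "x \<in> V"
  shows "region_points V E (vertex_region x G) \<subseteq>
    region_points V E (vertex_region x F) \<union> (\<Union>t \<in> (F - G) \<inter> children V E r x. up_closure V E r t)"
proof
  fix p assume p: "p \<in> region_points V E (vertex_region x G)"
  show "p \<in> region_points V E (vertex_region x F) \<union>
    (\<Union>t \<in> (F - G) \<inter> children V E r x. up_closure V E r t)"
  proof (cases p)
    case (Inl v)
    then have v: "v \<in> vertex_region x G" using p by simp
    show ?thesis
    proof (cases "v = x \<or> child_towards x v \<notin> F")
      case True
      then show ?thesis using v Inl unfolding vertex_region_def by auto
    next
      case False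
      then have "v \<in> V" "x \<in> set (root_path v)" "child_towards x v \<in> F - G"
        using v unfolding vertex_region_def by auto
      then show ?thesis using child_towards[of v x] False Inl by auto
    qed
  next
    case (Inr \<omega>)
    then obtain h where h: "\<omega> \<in> ends V E" "h \<in> \<omega>" "range h \<subseteq> vertex_region x G" using p by auto
    obtain n c where c: "c \<in> children V E r x" "c \<notin> G" "\<And>k. h (n + k) \<in> subtree c"
      using vertex_region_ray_tail[OF x end_is_ray[OF h(1,2)] h(3)] by blast
    show ?thesis
    proof (cases "c \<in> F")
      case True
      then show ?thesis using end_in_up_closure[OF h(1,2) c(3)] c(1,2) Inr by blast
    next
      case False
      have "(\<lambda>k. h (n + k)) \<in> \<omega>" using end_shift[OF h(1,2)] .
      moreover have "range (\<lambda>k. h (n + k)) \<subseteq> vertex_region x F"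
        using c(3) subtree_subset_vertex_region[OF x c(1) False] by blast
      ultimately show ?thesis using Inr h(1) by auto
    qed
  qed
qed

section \<open>First countability\<close>

lemma countable_children_meeting_if_first_countable:
  assumes fc: "first_countable (subtopology (end_topology V E) X)" and x: "x \<in> V" "Inl x \<in> X"
  shows "countable {t \<in> children V E r x. up_closure V E r t \<inter> X \<noteq> {}}" (is "countable ?C")
proof (rule ccontr)
  assume uncountable: "\<not> countable ?C"
  let ?T = "end_topology V E"
  let ?Y = "subtopology ?T X"
  have open_nbhd: "openin ?T (region_points V E (vertex_region x F))" if "finite F" for F
    using openin_region_points[OF region_vertex_region[OF x(1) that]] .
  have "Inl x \<in> region_points V E (vertex_region x {})" using self_in_vertex_region[OF x(1)] by simp
  then have "Inl x \<in> topspace ?Y" using openin_subset[OF open_nbhd[OF finite.emptyI]] x(2) by auto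
  from bspec[OF fc[unfolded first_countable_def] this]
  obtain B where B: "countable B" "\<forall>b\<in>B. openin ?Y b"
    "\<forall>U. openin ?Y U \<and> Inl x \<in> U \<longrightarrow> (\<exists>b\<in>B. Inl x \<in> b \<and> b \<subseteq> U)"
    by blast
  let ?B = "{b \<in> B. Inl x \<in> b}"
  have "\<forall>b\<in>?B. \<exists>F. finite F \<and> region_points V E (vertex_region x F) \<inter> X \<subseteq> b"
  proof
    fix b assume b: "b \<in> ?B"
    then have "openin ?Y b" using B(2) by blast
    then obtain W where W: "openin ?T W" "b = W \<inter> X" unfolding openin_subtopology by blast
    then obtain F where "finite F" "region_points V E (vertex_region x F) \<subseteq> W"
      using vertex_region_in_open[OF x(1) W(1)] b by blast
    then show "\<exists>F. finite F \<and> region_points V E (vertex_region x F) \<inter> X \<subseteq> b"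
      using W(2) by blast
  qed
  from bchoice[OF this]
  obtain F where F: "\<forall>b\<in>?B. finite (F b) \<and> region_points V E (vertex_region x (F b)) \<inter> X \<subseteq> b"
    by blast
  have "countable (\<Union>b\<in>?B. F b)"
    using B(1) F by (intro countable_UN) (auto intro: countable_finite)
  then have "\<not> ?C \<subseteq> (\<Union>b\<in>?B. F b)" using uncountable countable_subset by auto
  then obtain t where t: "t \<in> ?C" "t \<notin> (\<Union>b\<in>?B. F b)" by (meson subsetI)
  then obtain p where p: "p \<in> up_closure V E r t" "p \<in> X" and t_child: "t \<in> children V E r x"
    by blast
  have "openin ?Y (region_points V E (vertex_region x {t}) \<inter> X)"
    using open_nbhd[of "{t}"] by (simp add: openin_subtopology_Int)
  moreover have "Inl x \<in> region_points V E (vertex_region x {t}) \<inter> X"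
    using x self_in_vertex_region by simp
  ultimately obtain b where b: "b \<in> ?B" "b \<subseteq> region_points V E (vertex_region x {t}) \<inter> X"
    using B(3) by blast
  have "p \<in> region_points V E (vertex_region x (F b))"
    using up_closure_subset_vertex_region[OF x(1) t_child] t(2) b(1) p(1) by blast
  then have "p \<in> b" using F b(1) p(2) by blast
  then show False using b(2) p(1) up_closure_disjoint_vertex_region[OF x(1) t_child] by blast
qed

lemma countable_local_base_at_vertex:
  assumes x: "x \<in> V" and countable: "countable {t \<in> children V E r x. up_closure V E r t \<inter> X \<noteq> {}}"
    (is "countable ?C")
  shows "\<exists>B. countable B \<and> (\<forall>b\<in>B. openin (end_topology V E) b \<and> Inl x \<in> b) \<and>
    (\<forall>W. openin (end_topology V E) W \<and> Inl x \<in> W \<longrightarrow> (\<exists>b\<in>B. b \<inter> X \<subseteq> W))"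
proof -
  let ?B = "(\<lambda>F. region_points V E (vertex_region x F)) ` {F. finite F \<and> F \<subseteq> ?C}"
  have "countable ?B"
    using countable by (intro countable_image countable_Collect_finite_subset)
  moreover have "\<forall>b\<in>?B. openin (end_topology V E) b \<and> Inl x \<in> b"
    using openin_region_points[OF region_vertex_region[OF x]] self_in_vertex_region[OF x] by auto
  moreover have "\<exists>b\<in>?B. b \<inter> X \<subseteq> W" if W: "openin (end_topology V E) W" "Inl x \<in> W" for W
  proof -
    obtain F where F: "finite F" "region_points V E (vertex_region x F) \<subseteq> W"
      using vertex_region_in_open[OF x W] by blast
    have "region_points V E (vertex_region x (F \<inter> ?C)) \<inter> X \<subseteq> region_points V E (vertex_region x F)"
    proof
      fix p assume p: "p \<in> region_points V E (vertex_region x (F \<inter> ?C)) \<inter> X"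
      then have "p \<in> region_points V E (vertex_region x F) \<or>
          (\<exists>t \<in> (F - F \<inter> ?C) \<inter> children V E r x. p \<in> up_closure V E r t)"
        using region_points_vertex_region_subset[OF x, of "F \<inter> ?C" F] by blast
      then show "p \<in> region_points V E (vertex_region x F)" using p by blast
    qed
    then show ?thesis
      using F by (intro bexI[of _ "region_points V E (vertex_region x (F \<inter> ?C))"]) auto
  qed
  ultimately show ?thesis by (intro exI[of _ ?B] conjI) blast+
qed

lemma countable_local_base_at_end:
  assumes \<omega>: "\<omega> \<in> ends V E"
  shows "\<exists>B. countable B \<and> (\<forall>b\<in>B. openin (end_topology V E) b \<and> Inr \<omega> \<in> b) \<and>
    (\<forall>W. openin (end_topology V E) W \<and> Inr \<omega> \<in> W \<longrightarrow> (\<exists>b\<in>B. b \<subseteq> W))"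
proof -
  obtain g where g: "g \<in> \<omega>" "g 0 = r" "is_ray V E g" using end_has_rooted_ray[OF \<omega>] by blast
  have gV: "g n \<in> V" for n using g(3) unfolding is_ray_def by blast
  let ?B = "range (\<lambda>n. region_points V E (subtree (g n)))"
  have "\<forall>b\<in>?B. openin (end_topology V E) b \<and> Inr \<omega> \<in> b"
    using openin_region_points[OF region_subtree[OF gV]] end_in_subtree[OF g(3,2) \<omega> g(1)] by blast
  moreover have "\<exists>b\<in>?B. b \<subseteq> W" if "openin (end_topology V E) W" "Inr \<omega> \<in> W" for W
    using subtree_in_open[OF g(3,2) \<omega> g(1) that] by blast
  ultimately show ?thesis by (intro exI[of _ ?B] conjI) auto
qed

lemma first_countable_if_countable_children:
  assumes X: "X \<subseteq> points V E"
    and countable: "\<forall>x\<in>V. Inl x \<in> X \<longrightarrow>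
      countable {t \<in> children V E r x. up_closure V E r t \<inter> X \<noteq> {}}"
  shows "first_countable (subtopology (end_topology V E) X)"
proof (rule first_countable_subtopologyI)
  fix p assume "p \<in> X"
  then have "p \<in> Inl ` V \<union> Inr ` ends V E" using X unfolding points_def by blast
  then consider x where "p = Inl x" "x \<in> V" | \<omega> where "p = Inr \<omega>" "\<omega> \<in> ends V E"
    by auto
  then show "\<exists>B. countable B \<and> (\<forall>b\<in>B. openin (end_topology V E) b \<and> p \<in> b) \<and>
    (\<forall>W. openin (end_topology V E) W \<and> p \<in> W \<longrightarrow> (\<exists>b\<in>B. b \<inter> X \<subseteq> W))"
  proof cases
    case (1 x)
    then have "countable {t \<in> children V E r x. up_closure V E r t \<inter> X \<noteq> {}}"
      using countable \<open>p \<in> X\<close> by blast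
    then show ?thesis unfolding \<open>p = Inl x\<close> by (rule countable_local_base_at_vertex[OF \<open>x \<in> V\<close>])
  next
    case (2 \<omega>)
    obtain B where B: "countable B" "\<forall>b\<in>B. openin (end_topology V E) b \<and> Inr \<omega> \<in> b"
      "\<forall>W. openin (end_topology V E) W \<and> Inr \<omega> \<in> W \<longrightarrow> (\<exists>b\<in>B. b \<subseteq> W)"
      using countable_local_base_at_end[OF \<open>\<omega> \<in> ends V E\<close>] by (elim exE conjE)
    have "\<forall>W. openin (end_topology V E) W \<and> Inr \<omega> \<in> W \<longrightarrow> (\<exists>b\<in>B. b \<inter> X \<subseteq> W)"
    proof (intro allI impI)
      fix W assume "openin (end_topology V E) W \<and> Inr \<omega> \<in> W"
      then obtain b where "b \<in> B" "b \<subseteq> W" using B(3) by blast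
      then show "\<exists>b\<in>B. b \<inter> X \<subseteq> W" by blast
    qed
    with B(1,2) show ?thesis unfolding \<open>p = Inr \<omega>\<close> by blast
  qed
qed

end

theorem lemma3p2:
  fixes V :: "'v set" and E :: "'v \<Rightarrow> 'v \<Rightarrow> bool" and r :: 'v and X :: "'v point set"
  assumes "tree V E" and "r \<in> V" and "X \<subseteq> points V E"
  shows "first_countable (subtopology (end_topology V E) X) \<longleftrightarrow>
    (\<forall>x\<in>V. Inl x \<in> X \<longrightarrow>
       countable {t \<in> children V E r x. up_closure V E r t \<inter> X \<noteq> {}})"
proof -
  interpret rooted_tree V E r using assms(1,2) by unfold_locales
  show ?thesis
  proof
    assume "first_countable (subtopology (end_topology V E) X)"
    then show "\<forall>x\<in>V. Inl x \<in> X \<longrightarrow> countable {t \<in> children V E r x. up_closure V E r t \<inter> X \<noteq> {}}"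
      using countable_children_meeting_if_first_countable[OF \<open>first_countable _\<close>] by blast
  qed (rule first_countable_if_countable_children[OF assms(3)])
qed

end
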